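(* Let $X$ be an arbitrary topological space and let $U\subseteq X$ be a subset consisting of pairwise topologically indistinguishable points (i.e. for every open $V\subseteq X$, if $U\cap V\neq\emptyset$ then $U\subseteq V$). Let $f:X\to X$ be a (not necessarily continuous) bijection such that $f|_{X\setminus U}$ is the identity. Then (1) $f$ is a homeomorphism; and (2) $f$ and $\mathrm{Id}_X$ are isotopic, and moreover isotopic relative to $X\setminus U$ (i.e. via an isotopy $H$ with $H(x,t)=x$ for all $x\in X\setminus U$ and all $t$).
   Context: Two homeomorphisms $f,g$ of $X$ are isotopic if there is a continuous map $H:X\times[0,1]\to X$ such that each $H_t=H(\cdot,t)$ is a homeomorphism of $X$, $H_0=f$ and $H_1=g$. *)

theory Defs
  imports "HOL-Analysis.Analysis"
begin

definition isotopic_rel :: "'a topology \<Rightarrow> 'a set \<Rightarrow> ('a \<Rightarrow> 'a) \<Rightarrow> ('a \<Rightarrow> 'a) \<Rightarrow> bool" where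
  "isotopic_rel X A f g \<longleftrightarrow>
    (\<exists>H. continuous_map (prod_topology X (top_of_set {0..1::real})) X H \<and>
         (\<forall>t\<in>{0..1}. homeomorphic_map X X (\<lambda>x. H (x, t))) \<and>
         (\<forall>x\<in>topspace X. H (x, 0) = f x \<and> H (x, 1) = g x) \<and>
         (\<forall>x\<in>A. \<forall>t\<in>{0..1}. H (x, t) = x))"

definition isotopic :: "'a topology \<Rightarrow> ('a \<Rightarrow> 'a) \<Rightarrow> ('a \<Rightarrow> 'a) \<Rightarrow> bool" where
  "isotopic X f g \<longleftrightarrow> isotopic_rel X {} f g"

end

theory Submission
  imports Defs
begin

text \<open>An open set either misses U or contains it, so any map g that fixes the points
outside U and maps U into U satisfies g\<inverse>(V) = V for every open V. Such a map is
continuous, and open when it is bijective. The isotopy that equals f for t < 1 and the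
identity at t = 1 is continuous for the same reason: the preimage of an open V is V \<times> [0,1].\<close>

definition fixes_open_sets :: "'a topology \<Rightarrow> ('a \<Rightarrow> 'a) \<Rightarrow> bool" where
  "fixes_open_sets X g \<longleftrightarrow> (\<forall>V. openin X V \<longrightarrow> {x \<in> topspace X. g x \<in> V} = V)"

lemma fixes_open_sets_id: "fixes_open_sets X id"
  by (auto simp: fixes_open_sets_def dest: openin_subset)

lemma fixes_open_sets_imp_maps_topspace:
  assumes "fixes_open_sets X g" "x \<in> topspace X"
  shows "g x \<in> topspace X"
  using assms by (auto simp: fixes_open_sets_def)

lemma fixes_open_sets_if_fixes_outside_indistinguishable:
  assumes "U \<subseteq> topspace X"
    and indist: "\<And>V. openin X V \<Longrightarrow> U \<inter> V \<noteq> {} \<Longrightarrow> U \<subseteq> V"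
    and fixed: "\<And>x. x \<in> topspace X - U \<Longrightarrow> g x = x"
    and "g ` U \<subseteq> U"
  shows "fixes_open_sets X g"
  unfolding fixes_open_sets_def
proof (intro allI impI)
  fix V assume V: "openin X V"
  have "g x \<in> V \<longleftrightarrow> x \<in> V" if "x \<in> topspace X" for x
  proof (cases "x \<in> U")
    case True
    then have "g x \<in> U" using \<open>g ` U \<subseteq> U\<close> by blast
    with True show ?thesis using indist[OF V] by blast
  qed (use fixed that in auto)
  then show "{x \<in> topspace X. g x \<in> V} = V"
    using openin_subset[OF V] by blast
qed

lemma continuous_map_if_fixes_open_sets:
  assumes "fixes_open_sets X g"
  shows "continuous_map X X g"
  using assms fixes_open_sets_imp_maps_topspace
  by (auto simp: continuous_map_def fixes_open_sets_def)

lemma homeomorphic_map_if_fixes_open_sets: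
  assumes g: "fixes_open_sets X g" and bij: "bij_betw g (topspace X) (topspace X)"
  shows "homeomorphic_map X X g"
proof (rule bijective_open_imp_homeomorphic_map)
  show "open_map X X g"
    unfolding open_map_def
  proof (intro allI impI)
    fix V assume V: "openin X V"
    have "g ` V = g ` {x \<in> topspace X. g x \<in> V}"
      using g V by (simp add: fixes_open_sets_def)
    also have "\<dots> = V"
      using bij openin_subset[OF V] by (auto simp: bij_betw_def)
    finally show "openin X (g ` V)" using V by simp
  qed
  show "continuous_map X X g" using g by (rule continuous_map_if_fixes_open_sets)
qed (use bij in \<open>simp_all add: bij_betw_def\<close>)

lemma continuous_map_prod_if_stages_fix_open_sets:
  assumes "\<And>t. t \<in> T \<Longrightarrow> fixes_open_sets X (\<lambda>x. H (x, t))"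
  shows "continuous_map (prod_topology X (top_of_set T)) X H"
  unfolding continuous_map_def
proof (intro conjI allI impI)
  show "H \<in> topspace (prod_topology X (top_of_set T)) \<rightarrow> topspace X"
    using assms fixes_open_sets_imp_maps_topspace by fastforce
  fix V assume V: "openin X V"
  have "{z \<in> topspace (prod_topology X (top_of_set T)). H z \<in> V} = V \<times> T"
    using assms V by (force simp: fixes_open_sets_def)
  then show "openin (prod_topology X (top_of_set T))
               {z \<in> topspace (prod_topology X (top_of_set T)). H z \<in> V}"
    using V by (simp add: openin_prod_Times_iff)
qed

lemma bij_betw_fixing_complement_maps_into:
  assumes "U \<subseteq> A" "bij_betw f A A" "\<And>x. x \<in> A - U \<Longrightarrow> f x = x"
  shows "f ` U \<subseteq> U"
proof
  fix y assume "y \<in> f ` U"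
  then obtain x where x: "x \<in> U" "y = f x" by blast
  show "y \<in> U"
  proof (rule ccontr)
    assume "y \<notin> U"
    then have "f y = f x"
      using x assms bij_betw_apply by fastforce
    then show False
      using x \<open>y \<notin> U\<close> assms bij_betw_apply bij_betw_imp_inj_on[OF assms(2)]
      by (metis inj_onD subsetD)
  qed
qed

lemma isotopic_if_isotopic_rel: "isotopic_rel X A f g \<Longrightarrow> isotopic X f g"
  unfolding isotopic_def isotopic_rel_def by blast

theorem lemma2p1:
  fixes X :: "'a topology" and U :: "'a set" and f :: "'a \<Rightarrow> 'a"
  assumes "U \<subseteq> topspace X"
    and "\<And>V. openin X V \<Longrightarrow> U \<inter> V \<noteq> {} \<Longrightarrow> U \<subseteq> V"
    and "bij_betw f (topspace X) (topspace X)"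
    and "\<And>x. x \<in> topspace X - U \<Longrightarrow> f x = x"
  shows "homeomorphic_map X X f \<and> isotopic X f id \<and> isotopic_rel X (topspace X - U) f id"
proof -
  have "f ` U \<subseteq> U"
    using assms(1,3,4) by (rule bij_betw_fixing_complement_maps_into)
  then have f: "fixes_open_sets X f"
    using assms(1,2,4) fixes_open_sets_if_fixes_outside_indistinguishable by blast
  then have homeo: "homeomorphic_map X X f"
    using assms(3) by (rule homeomorphic_map_if_fixes_open_sets)
  define H where "H = (\<lambda>(x, t::real). if t = 1 then x else f x)"
  have stages: "(\<lambda>x. H (x, t)) = (if t = 1 then id else f)" for t
    by (auto simp: H_def)
  have "isotopic_rel X (topspace X - U) f id"
    unfolding isotopic_rel_def
  proof (intro exI conjI ballI)
    show "continuous_map (prod_topology X (top_of_set {0..1})) X H"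
      using f by (intro continuous_map_prod_if_stages_fix_open_sets) (simp add: stages fixes_open_sets_id)
  qed (use homeo stages assms(4) in \<open>auto simp: H_def\<close>)
  with homeo show ?thesis
    using isotopic_if_isotopic_rel by blast
qed

end
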